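(* Let $R$ be a linear involution of $\mathbb{T}^2$ induced by an integer matrix $A$ with $\det A=\pm1$, $A^2=\mathrm{Id}$, $A\neq\pm\mathrm{Id}$. Then the set of area-preserving $R$-reversible Anosov diffeomorphisms of $\mathbb{T}^2$ is non-empty and has no isolated points in the $C^1$ topology.
   Context: $\mathbb{T}^2=\mathbb{R}^2/\mathbb{Z}^2$ with normalized Lebesgue measure $\mu$. A diffeomorphism $f$ is $R$-reversible if $R\circ f=f^{-1}\circ R$; it is Anosov if $\mathbb{T}^2$ is a uniformly hyperbolic set for $f$. *)

theory Defs
  imports "HOL-Analysis.Analysis"
begin

text \<open>The torus T^2 = R^2/Z^2 is handled through lifts to R^2 = real^2.\<close>

definition int_vec :: "real^2 \<Rightarrow> bool" where
  "int_vec x \<longleftrightarrow> (\<forall>i. x $ i \<in> \<int>)"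

text \<open>Two points of R^2 represent the same point of the torus.\<close>
definition teq :: "real^2 \<Rightarrow> real^2 \<Rightarrow> bool" where
  "teq x y \<longleftrightarrow> int_vec (x - y)"

text \<open>Two lifts represent the same map of the torus.\<close>
definition tmap_eq :: "(real^2 \<Rightarrow> real^2) \<Rightarrow> (real^2 \<Rightarrow> real^2) \<Rightarrow> bool" where
  "tmap_eq F G \<longleftrightarrow> (\<forall>x. teq (F x) (G x))"

definition descends :: "(real^2 \<Rightarrow> real^2) \<Rightarrow> bool" where
  "descends F \<longleftrightarrow> (\<forall>x k. int_vec k \<longrightarrow> int_vec (F (x + k) - F x))"

definition C1_map :: "(real^2 \<Rightarrow> real^2) \<Rightarrow> bool" where
  "C1_map F \<longleftrightarrow> (\<forall>x. F differentiable (at x)) \<and>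
     continuous_on UNIV (\<lambda>x. matrix (frechet_derivative F (at x)))"

text \<open>(F, G) are lifts of a C^1 diffeomorphism of the torus and of its inverse.\<close>
definition torus_diffeo :: "(real^2 \<Rightarrow> real^2) \<Rightarrow> (real^2 \<Rightarrow> real^2) \<Rightarrow> bool" where
  "torus_diffeo F G \<longleftrightarrow> descends F \<and> descends G \<and> C1_map F \<and> C1_map G \<and>
     (\<forall>x. G (F x) = x) \<and> (\<forall>y. F (G y) = y)"

definition unit_cube :: "(real^2) set" where
  "unit_cube = {x. \<forall>i. 0 \<le> x $ i \<and> x $ i < 1}"

text \<open>Z^2-periodic subsets of R^2 = subsets of the torus.\<close>
definition periodic_set :: "(real^2) set \<Rightarrow> bool" where
  "periodic_set E \<longleftrightarrow> (\<forall>x k. int_vec k \<longrightarrow> (x + k \<in> E \<longleftrightarrow> x \<in> E))"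

text \<open>f preserves the normalized Lebesgue measure mu of the torus: mu(f^-1 E) = mu(E).\<close>
definition area_preserving :: "(real^2 \<Rightarrow> real^2) \<Rightarrow> bool" where
  "area_preserving F \<longleftrightarrow>
     (\<forall>E. E \<in> sets lborel \<and> periodic_set E \<longrightarrow>
        emeasure lborel ({x. F x \<in> E} \<inter> unit_cube) = emeasure lborel (E \<inter> unit_cube))"

definition of_int_mat :: "int^2^2 \<Rightarrow> real^2^2" where
  "of_int_mat A = (\<chi> i j. real_of_int (A $ i $ j))"

definition lin_lift :: "int^2^2 \<Rightarrow> real^2 \<Rightarrow> real^2" where
  "lin_lift A x = of_int_mat A *v x"

text \<open>R o f = f^-1 o R on the torus, with R induced by A, G a lift of f^-1.\<close>
definition reversible :: "int^2^2 \<Rightarrow> (real^2 \<Rightarrow> real^2) \<Rightarrow> (real^2 \<Rightarrow> real^2) \<Rightarrow> bool" where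
  "reversible A F G \<longleftrightarrow> (\<forall>x. teq (lin_lift A (F x)) (G (lin_lift A x)))"

definition anosov :: "(real^2 \<Rightarrow> real^2) \<Rightarrow> (real^2 \<Rightarrow> real^2) \<Rightarrow> bool" where
  "anosov F G \<longleftrightarrow>
    (\<exists>C lam Es Eu. C > 0 \<and> 0 < lam \<and> lam < 1 \<and>
      (\<forall>x k. int_vec k \<longrightarrow> Es (x + k) = Es x \<and> Eu (x + k) = Eu x) \<and>
      (\<forall>x. subspace (Es x) \<and> subspace (Eu x) \<and> Es x \<inter> Eu x = {0} \<and>
           {a + b | a b. a \<in> Es x \<and> b \<in> Eu x} = UNIV \<and>
           frechet_derivative F (at x) ` Es x = Es (F x) \<and>
           frechet_derivative F (at x) ` Eu x = Eu (F x) \<and>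
           (\<forall>n v. v \<in> Es x \<longrightarrow>
              norm (frechet_derivative (F ^^ n) (at x) v) \<le> C * lam ^ n * norm v) \<and>
           (\<forall>n v. v \<in> Eu x \<longrightarrow>
              norm (frechet_derivative (G ^^ n) (at x) v) \<le> C * lam ^ n * norm v)))"

definition good_map :: "int^2^2 \<Rightarrow> (real^2 \<Rightarrow> real^2) \<Rightarrow> (real^2 \<Rightarrow> real^2) \<Rightarrow> bool" where
  "good_map A F G \<longleftrightarrow> torus_diffeo F G \<and> area_preserving F \<and> reversible A F G \<and> anosov F G"

end

theory Submission
  imports Defs
begin

(* An integral involution A <> +-Id is traceless with det A = -1.  For any other
   traceless integral involution N, the matrix B = A N has determinant 1 and satisfies
   A B A = N A = B^-1, so the linear automorphism induced by B is R-reversible.  Choosing N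
   with tr B >= 3 makes B hyperbolic: its eigenvalues are nu and 1/nu with 0 < nu < 1, and the
   two eigenlines form a constant Anosov splitting.  Unimodular linear maps preserve area
   because they carry the unit cube to another fundamental domain of the Z^2-action.

   A fixes a nonzero vector p.  Conjugating a reversible area-preserving
   Anosov map F by the translation x |-> x + t p preserves all four properties (this
   translation commutes with R) and is C^1-close to F for small t, by uniform continuity of
   F and DF.  For some small t the conjugate differs from F: otherwise F commutes exactly
   with all small translations along p, so every D(F^n) fixes p, which is impossible for an
   Anosov map since both the stable and the unstable component of p would have to vanish. *)

section \<open>Integer vectors and fundamental domains of the torus\<close>

lemma int_vec_diff: "int_vec a \<Longrightarrow> int_vec b \<Longrightarrow> int_vec (a - b)"
  by (auto simp: int_vec_def)

lemma int_vec_uminus: "int_vec a \<Longrightarrow> int_vec (- a)"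
  by (auto simp: int_vec_def)

lemma unit_cube_translate_ex: "\<exists>m. int_vec m \<and> x + m \<in> unit_cube"
proof -
  define m :: "real^2" where "m = (\<chi> i. - of_int \<lfloor>x $ i\<rfloor>)"
  have "int_vec m" by (auto simp: m_def int_vec_def)
  moreover have "x + m \<in> unit_cube"
    by (auto simp: unit_cube_def m_def) linarith+
  ultimately show ?thesis by blast
qed

lemma unit_cube_translate_unique:
  assumes "y \<in> unit_cube" "y + k \<in> unit_cube" "int_vec k"
  shows "k = 0"
proof -
  have "k $ i = 0" for i
  proof -
    from assms(3) obtain n where n: "k $ i = of_int n"
      by (auto simp: int_vec_def elim: Ints_cases)
    from assms(1,2) have "0 \<le> y$i" "y$i < 1" "0 \<le> y$i + k$i" "y$i + k$i < 1"
      by (auto simp: unit_cube_def)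
    then have "-1 < real_of_int n" "real_of_int n < 1" using n by auto
    then show ?thesis using n by auto
  qed
  then show ?thesis by (simp add: vec_eq_iff)
qed

lemma norm_unit_cube: "x \<in> unit_cube \<Longrightarrow> norm x \<le> 2"
proof -
  assume x: "x \<in> unit_cube"
  have "norm x \<le> (\<Sum>i\<in>UNIV. \<bar>x$i\<bar>)" by (rule norm_le_l1_cart)
  also have "\<dots> = \<bar>x$1\<bar> + \<bar>x$2\<bar>" by (simp add: sum_2)
  also have "\<dots> \<le> 2"
    using x unfolding unit_cube_def by (smt (verit) mem_Collect_eq)
  finally show ?thesis .
qed

lemma bounded_unit_cube: "bounded unit_cube"
  unfolding bounded_iff using norm_unit_cube by blast

lemma unit_cube_borel [measurable]: "unit_cube \<in> sets lborel"
proof -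
  have "unit_cube = {x::real^2. 0 \<le> x$1 \<and> x$1 < 1 \<and> 0 \<le> x$2 \<and> x$2 < 1}"
    by (auto simp: unit_cube_def forall_2)
  also have "\<dots> \<in> sets lborel" by measurable
  finally show ?thesis .
qed

text \<open>A continuous function with values in \<open>\<int>\<^sup>2\<close> on a connected set is constant;
  this is how "equal on the torus" is upgraded to an identity of lifts.\<close>

lemma int_vec_valued_constant:
  fixes g :: "'a::topological_space \<Rightarrow> real^2"
  assumes "connected S" "continuous_on S g" "\<And>x. x \<in> S \<Longrightarrow> int_vec (g x)"
    and "a \<in> S" "x \<in> S"
  shows "g x = g a"
proof -
  have "(\<lambda>x. g x $ i) constant_on S" for i
  proof (rule continuous_discrete_range_constant[OF assms(1)])
    show "continuous_on S (\<lambda>x. g x $ i)"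
      by (intro continuous_intros assms(2))
    fix x assume x: "x \<in> S"
    show "\<exists>e>0. \<forall>y. y \<in> S \<and> g y $ i \<noteq> g x $ i \<longrightarrow> e \<le> norm (g y $ i - g x $ i)"
    proof (intro exI[of _ 1] conjI allI impI)
      fix y assume y: "y \<in> S \<and> g y $ i \<noteq> g x $ i"
      have "g y $ i - g x $ i \<in> \<int>" using assms(3) x y by (auto simp: int_vec_def)
      then obtain n where n: "g y $ i - g x $ i = of_int n" by (auto elim: Ints_cases)
      with y have "n \<noteq> 0" by auto
      then show "1 \<le> norm (g y $ i - g x $ i)" using n by (simp only: n real_norm_def)
    qed simp
  qed
  then show ?thesis using assms(4,5) by (auto simp: constant_on_def vec_eq_iff) metis
qed

lemma countable_int_vecs: "countable {k::real^2. int_vec k}"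
proof -
  have "{k::real^2. int_vec k} \<subseteq> range (\<lambda>f::2\<Rightarrow>int. \<chi> i. real_of_int (f i))"
  proof
    fix k :: "real^2" assume "k \<in> {k. int_vec k}"
    then have "\<forall>i. \<exists>n. k $ i = real_of_int n" by (auto simp: int_vec_def elim!: Ints_cases)
    then obtain f where "\<forall>i. k $ i = real_of_int (f i)" by metis
    then have "k = (\<chi> i. real_of_int (f i))" by (simp add: vec_eq_iff)
    then show "k \<in> range (\<lambda>f::2\<Rightarrow>int. \<chi> i. real_of_int (f i))" by blast
  qed
  then show ?thesis by (rule countable_subset) simp
qed

lemma emeasure_translate:
  assumes "Y \<in> sets lborel"
  shows "emeasure lborel {x::real^2. x + k \<in> Y} = emeasure lborel Y"
proof -
  have "emeasure lborel Y = emeasure (distr lborel borel ((+) k)) Y"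
    by (simp add: lborel_distr_plus)
  also have "\<dots> = emeasure lborel ((+) k -` Y \<inter> space lborel)"
    using assms by (subst emeasure_distr) auto
  also have "(+) k -` Y \<inter> space lborel = {x. x + k \<in> Y}" by (auto simp: add.commute)
  finally show ?thesis by simp
qed

text \<open>Any measurable fundamental domain \<open>D\<close> of the \<open>\<int>\<^sup>2\<close>-action sees a periodic set
  with the same measure as the unit cube does: cut \<open>P \<inter> D\<close> along the translates of the
  cube and move each piece back into the cube.\<close>

lemma fundamental_domain:
  assumes D: "D \<in> sets lborel"
    and ex: "\<And>x. \<exists>k. int_vec k \<and> x + k \<in> D"
    and un: "\<And>x k k'. int_vec k \<Longrightarrow> int_vec k' \<Longrightarrow> x + k \<in> D \<Longrightarrow> x + k' \<in> D \<Longrightarrow> k = k'"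
    and P: "P \<in> sets lborel" "periodic_set P"
  shows "emeasure lborel (P \<inter> D) = emeasure lborel (P \<inter> unit_cube)"
proof -
  let ?Z = "{k::real^2. int_vec k}"
  define X where "X k = P \<inter> D \<inter> {x. x + k \<in> unit_cube}" for k
  define Y where "Y k = P \<inter> {y. y - k \<in> D} \<inter> unit_cube" for k
  note [measurable] = D P(1)
  have X_borel: "X k \<in> sets lborel" for k unfolding X_def by measurable
  have Y_borel: "Y k \<in> sets lborel" for k unfolding Y_def by measurable
  have PD: "P \<inter> D = \<Union>(X ` ?Z)"
  proof safe
    fix x assume x: "x \<in> P" "x \<in> D"
    obtain m where "int_vec m" "x + m \<in> unit_cube" using unit_cube_translate_ex by blast
    then show "x \<in> \<Union>(X ` ?Z)" using x by (auto simp: X_def)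
  qed (auto simp: X_def)
  have PC: "P \<inter> unit_cube = \<Union>(Y ` ?Z)"
  proof safe
    fix y assume y: "y \<in> P" "y \<in> unit_cube"
    obtain m where m: "int_vec m" "y + m \<in> D" using ex by blast
    then show "y \<in> \<Union>(Y ` ?Z)" using y int_vec_uminus[OF m(1)] by (auto simp: Y_def)
  qed (auto simp: Y_def)
  have disj_X: "disjoint_family_on X ?Z"
    unfolding disjoint_family_on_def
  proof safe
    fix k k' x assume k: "int_vec k" "int_vec k'" "k \<noteq> k'" "x \<in> X k" "x \<in> X k'"
    have "(x + k) + (k' - k) \<in> unit_cube" using k by (auto simp: X_def algebra_simps)
    then have "k' - k = 0"
      using unit_cube_translate_unique[of "x + k" "k' - k"] k by (auto simp: X_def int_vec_diff)
    then show "x \<in> {}" using k by simp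
  qed
  have disj_Y: "disjoint_family_on Y ?Z"
    unfolding disjoint_family_on_def
  proof safe
    fix k k' x assume k: "int_vec k" "int_vec k'" "k \<noteq> k'" "x \<in> Y k" "x \<in> Y k'"
    have "x + (- k) \<in> D" "x + (- k') \<in> D" using k by (auto simp: Y_def)
    then have "- k = - k'" using un int_vec_uminus k(1,2) by blast
    then show "x \<in> {}" using k by simp
  qed
  have XY: "emeasure lborel (X k) = emeasure lborel (Y k)" if k: "int_vec k" for k
  proof -
    have "x + k \<in> P \<longleftrightarrow> x \<in> P" for x using P(2) k by (simp add: periodic_set_def)
    then have "X k = {x. x + k \<in> Y k}" by (auto simp: X_def Y_def)
    then show ?thesis using emeasure_translate[OF Y_borel] by simp
  qed
  have "emeasure lborel (P \<inter> D) = (\<integral>\<^sup>+k. emeasure lborel (X k) \<partial>count_space ?Z)"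
    unfolding PD by (rule emeasure_UN_countable[OF X_borel countable_int_vecs disj_X])
  also have "\<dots> = (\<integral>\<^sup>+k. emeasure lborel (Y k) \<partial>count_space ?Z)"
    by (rule nn_integral_cong) (simp add: XY)
  also have "\<dots> = emeasure lborel (P \<inter> unit_cube)"
    unfolding PC by (rule emeasure_UN_countable[OF Y_borel countable_int_vecs disj_Y, symmetric])
  finally show ?thesis .
qed

lemma emeasure_periodic_translated_cube:
  assumes P: "P \<in> sets lborel" "periodic_set P"
  shows "emeasure lborel (P \<inter> {y. y + c \<in> unit_cube}) = emeasure lborel (P \<inter> unit_cube)"
proof (rule fundamental_domain[OF _ _ _ P])
  show "{y. y + c \<in> unit_cube} \<in> sets lborel" by measurable
next
  fix x obtain m where "int_vec m" "x + c + m \<in> unit_cube"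
    using unit_cube_translate_ex by blast
  then show "\<exists>k. int_vec k \<and> x + k \<in> {y. y + c \<in> unit_cube}"
    by (intro exI[of _ m]) (simp add: algebra_simps)
next
  fix x k k' assume k: "int_vec k" "int_vec k'"
    "x + k \<in> {y. y + c \<in> unit_cube}" "x + k' \<in> {y. y + c \<in> unit_cube}"
  then have "x + k + c \<in> unit_cube" "(x + k + c) + (k' - k) \<in> unit_cube"
    by (simp_all add: algebra_simps)
  then have "k' - k = 0" using unit_cube_translate_unique int_vec_diff k(1,2) by blast
  then show "k = k'" by simp
qed

section \<open>Linear automorphisms of the torus\<close>

lemma of_int_mat_mult: "of_int_mat (A ** B) = of_int_mat A ** of_int_mat B"
  by (simp add: of_int_mat_def matrix_matrix_mult_def vec_eq_iff)

lemma of_int_mat_1: "of_int_mat (mat 1) = mat 1"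
  by (simp add: of_int_mat_def mat_def vec_eq_iff)

lemma lin_lift_mult: "lin_lift A (lin_lift B x) = lin_lift (A ** B) x"
  by (simp add: lin_lift_def of_int_mat_mult matrix_vector_mul_assoc)

lemma lin_lift_inverse: "A ** B = mat 1 \<Longrightarrow> lin_lift A (lin_lift B x) = x"
  by (simp only: lin_lift_mult) (simp add: lin_lift_def of_int_mat_1)

lemma linear_lin_lift: "linear (lin_lift A)"
  unfolding lin_lift_def by (rule matrix_vector_mul_linear)

lemma lin_lift_add: "lin_lift A (x + y) = lin_lift A x + lin_lift A y"
  by (rule linear_add[OF linear_lin_lift])

lemma lin_lift_nth: "lin_lift B x $ i = of_int (B$i$1) * x$1 + of_int (B$i$2) * x$2"
  by (simp add: lin_lift_def of_int_mat_def matrix_vector_mult_def sum_2)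

lemma int_vec_lin_lift: "int_vec k \<Longrightarrow> int_vec (lin_lift A k)"
  by (auto simp: int_vec_def lin_lift_nth)

lemma lin_lift_borel [measurable]: "lin_lift A \<in> borel_measurable borel"
  by (intro borel_measurable_continuous_onI linear_continuous_on)
    (simp add: linear_lin_lift linear_conv_bounded_linear[symmetric])

lemma frechet_derivative_linear:
  fixes L :: "'a::euclidean_space \<Rightarrow> 'a"
  assumes "linear L"
  shows "frechet_derivative (L ^^ n) (at x) = L ^^ n"
proof -
  have "linear (L ^^ n)"
  proof (induction n)
    case (Suc n) then show ?case using linear_compose[OF Suc assms] by (simp add: o_def)
  qed (simp add: linear_iff)
  then show ?thesis
    by (rule frechet_derivative_at[OF linear_imp_has_derivative, symmetric])
qed

lemma frechet_derivative_lin_lift: "frechet_derivative (lin_lift B) (at x) = lin_lift B"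
  using frechet_derivative_linear[OF linear_lin_lift, where n=1] by simp

lemma torus_diffeo_lin_lift:
  assumes "B ** Bi = mat 1" "Bi ** B = mat 1"
  shows "torus_diffeo (lin_lift B) (lin_lift Bi)"
proof -
  have C1: "C1_map (lin_lift M)" for M
    unfolding C1_map_def frechet_derivative_lin_lift
    using linear_imp_differentiable[OF linear_lin_lift] by simp
  have "descends (lin_lift M)" for M
    by (simp add: descends_def lin_lift_add int_vec_lin_lift)
  then show ?thesis
    using C1 assms by (simp add: torus_diffeo_def lin_lift_inverse)
qed

lemma reversible_lin_lift:
  assumes "A ** B = Bi ** A"
  shows "reversible A (lin_lift B) (lin_lift Bi)"
  unfolding reversible_def teq_def by (simp add: lin_lift_mult assms int_vec_def)

text \<open>A unimodular linear map preserves the area of the torus: it maps the unit cube onto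
  another fundamental domain of the same Lebesgue measure.\<close>

lemma area_preserving_lin_lift:
  assumes BB: "B ** Bi = mat 1" "Bi ** B = mat 1" and det: "\<bar>det B\<bar> = 1"
  shows "area_preserving (lin_lift B)"
  unfolding area_preserving_def
proof safe
  fix E assume E: "E \<in> sets lborel" "periodic_set E"
  note [measurable] = E(1)
  define S where "S = {x. lin_lift B x \<in> E} \<inter> unit_cube"
  define D where "D = {y. lin_lift Bi y \<in> unit_cube}"
  have S_borel [measurable]: "S \<in> sets lborel" unfolding S_def by measurable
  have D_borel [measurable]: "D \<in> sets lborel" unfolding D_def by measurable
  have bounded_S: "bounded S"
    using bounded_unit_cube by (auto simp: S_def intro: bounded_subset)
  have image_S: "lin_lift B ` S = E \<inter> D"
  proof safe
    fix y assume y: "y \<in> E" "y \<in> D"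
    have "lin_lift Bi y \<in> S" using y by (auto simp: S_def D_def lin_lift_inverse[OF BB(1)])
    then show "y \<in> lin_lift B ` S" using lin_lift_inverse[OF BB(1)] by (metis image_eqI)
  qed (auto simp: S_def D_def lin_lift_inverse[OF BB(2)])
  have bounded_ED: "bounded (E \<inter> D)" unfolding image_S[symmetric]
    by (rule bounded_linear_image[OF bounded_S])
      (simp add: linear_lin_lift linear_conv_bounded_linear[symmetric])
  have "S \<in> lmeasurable"
    by (rule bounded_set_imp_lmeasurable[OF bounded_S]) (use S_borel in \<open>simp add: sets_completionI_sets\<close>)
  then have "measure lebesgue (lin_lift B ` S) = \<bar>det (matrix (lin_lift B))\<bar> * measure lebesgue S"
    by (rule measure_linear_image[OF linear_lin_lift])
  also have "\<bar>det (matrix (lin_lift B))\<bar> = 1"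
  proof -
    have "det (matrix (lin_lift B)) = of_int (det B)"
      by (simp add: lin_lift_def[abs_def] det_2 of_int_mat_def)
    then show ?thesis using det by (metis of_int_1 of_int_abs)
  qed
  finally have "measure lborel (E \<inter> D) = measure lborel S"
    using image_S measure_completion[OF S_borel] measure_completion[of "E \<inter> D"] by simp
  then have "emeasure lborel S = emeasure lborel (E \<inter> D)"
    using emeasure_bounded_finite[OF bounded_S] emeasure_bounded_finite[OF bounded_ED]
    by (simp add: emeasure_eq_ennreal_measure)
  also have "\<dots> = emeasure lborel (E \<inter> unit_cube)"
  proof (rule fundamental_domain[OF D_borel _ _ E])
    fix x
    obtain m where m: "int_vec m" "lin_lift Bi x + m \<in> unit_cube"
      using unit_cube_translate_ex by blast
    have "lin_lift Bi (x + lin_lift B m) = lin_lift Bi x + m"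
      by (simp add: lin_lift_add lin_lift_inverse[OF BB(2)])
    then show "\<exists>k. int_vec k \<and> x + k \<in> D"
      using m int_vec_lin_lift[OF m(1), of B] unfolding D_def by (intro exI[of _ "lin_lift B m"]) simp
  next
    fix x k k' assume k: "int_vec k" "int_vec k'" "x + k \<in> D" "x + k' \<in> D"
    let ?y = "lin_lift Bi x + lin_lift Bi k"
    have "?y \<in> unit_cube" "?y + (lin_lift Bi k' - lin_lift Bi k) \<in> unit_cube"
      using k by (auto simp: D_def lin_lift_add)
    then have "lin_lift Bi k' - lin_lift Bi k = 0"
      using unit_cube_translate_unique int_vec_diff int_vec_lin_lift k(1,2) by blast
    then have "lin_lift B (lin_lift Bi k) = lin_lift B (lin_lift Bi k')" by simp
    then show "k = k'" by (simp add: lin_lift_inverse[OF BB(1)])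
  qed
  finally show "emeasure lborel ({x. lin_lift B x \<in> E} \<inter> unit_cube) = emeasure lborel (E \<inter> unit_cube)"
    by (simp add: S_def)
qed

section \<open>Hyperbolic automorphisms are Anosov\<close>

lemma eigenvectors_span:
  fixes L :: "real^2 \<Rightarrow> real^2"
  assumes L: "linear L" and u: "L u = a *\<^sub>R u" "u \<noteq> 0" and v: "L v = b *\<^sub>R v" "v \<noteq> 0"
    and ab: "a \<noteq> b"
  shows "span {u, v} = UNIV"
proof -
  have u_notin: "u \<notin> span {v}"
  proof
    assume "u \<in> span {v}"
    then obtain k where k: "u = k *\<^sub>R v" by (auto simp: span_singleton)
    have "a *\<^sub>R u = b *\<^sub>R u" by (metis k u(1) v(1) linear_scale[OF L] scaleR_left_commute)
    then show False using ab u(2) by simp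
  qed
  then have indep: "independent {u, v}"
    using v(2) by (simp add: independent_insert)
  have "u \<noteq> v" using u_notin span_base by blast
  then have "dim (UNIV :: (real^2) set) \<le> card {u, v}" by simp
  then show ?thesis using card_ge_dim_independent[OF subset_UNIV indep] by auto
qed

lemma eigenline_image:
  assumes "linear L" "L v = c *\<^sub>R v" "c \<noteq> 0"
  shows "L ` span {v} = span {v}"
proof -
  have image: "L (k *\<^sub>R v) = (k * c) *\<^sub>R v" for k
    by (simp add: linear_scale[OF assms(1)] assms(2))
  have preimage: "k *\<^sub>R v = L ((k / c) *\<^sub>R v)" for k
    using assms(3) by (simp add: image)
  show ?thesis
    unfolding span_singleton
  proof safe
    fix k show "L (k *\<^sub>R v) \<in> range (\<lambda>k. k *\<^sub>R v)" unfolding image by blast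
  next
    fix k show "k *\<^sub>R v \<in> L ` range (\<lambda>k. k *\<^sub>R v)" using preimage[of k] by blast
  qed
qed

lemma funpow_eigenvector:
  assumes "linear L" "L v = c *\<^sub>R v"
  shows "(L ^^ n) (k *\<^sub>R v) = (k * c ^ n) *\<^sub>R v"
proof (induction n)
  case (Suc n)
  have "(L ^^ Suc n) (k *\<^sub>R v) = (k * c ^ n) *\<^sub>R L v"
    using Suc by (simp add: linear_scale[OF assms(1)])
  then show ?case by (simp add: assms(2) mult.assoc mult.commute)
qed simp

text \<open>A linear automorphism of the torus with eigenvalues \<open>0 < \<nu> < 1 < 1/\<nu>\<close> is Anosov:
  the eigenlines are the (constant) stable and unstable bundles.\<close>

lemma anosov_linear:
  fixes L Li :: "real^2 \<Rightarrow> real^2"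
  assumes L: "linear L" "linear Li" and inv: "\<And>x. Li (L x) = x"
    and es: "L es = \<nu> *\<^sub>R es" "es \<noteq> 0" and eu: "L eu = (1 / \<nu>) *\<^sub>R eu" "eu \<noteq> 0"
    and \<nu>: "0 < \<nu>" "\<nu> < 1"
  shows "anosov L Li"
proof -
  have Li_eu: "Li eu = \<nu> *\<^sub>R eu"
    using arg_cong[OF eu(1), of "\<lambda>w. \<nu> *\<^sub>R Li w"] \<nu> by (simp add: inv linear_scale[OF L(2)])
  have "\<nu> * \<nu> < 1 * 1" using \<nu> by (intro mult_strict_mono) auto
  then have distinct: "\<nu> \<noteq> 1 / \<nu>" using \<nu> by (auto simp: field_simps)
  have sum_UNIV: "{a + b |a b. a \<in> span {es} \<and> b \<in> span {eu}} = UNIV"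
  proof safe
    fix w :: "real^2"
    have "w \<in> span {eu, es}" using eigenvectors_span[OF L(1) eu es distinct[symmetric]] by simp
    then obtain k where "w - k *\<^sub>R eu \<in> span {es}" by (auto simp: span_insert)
    moreover have "k *\<^sub>R eu \<in> span {eu}" by (simp add: span_base span_scale)
    ultimately show "\<exists>a b. w = a + b \<and> a \<in> span {es} \<and> b \<in> span {eu}" by force
  qed simp
  have trivial_meet: "span {es} \<inter> span {eu} = {0}"
  proof safe
    fix v assume v: "v \<in> span {es}" "v \<in> span {eu}"
    obtain k where k: "v = k *\<^sub>R es" using v(1) by (auto simp: span_singleton)
    obtain l where l: "v = l *\<^sub>R eu" using v(2) by (auto simp: span_singleton)
    have "\<nu> *\<^sub>R v = (1 / \<nu>) *\<^sub>R v"
      using k l es(1) eu(1) by (metis linear_scale[OF L(1)] scaleR_left_commute)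
    then show "v = 0" using distinct by simp
  qed (simp_all add: span_zero)
  have decay: "norm ((M ^^ n) v) \<le> 1 * \<nu> ^ n * norm v"
    if M: "linear M" "M e = \<nu> *\<^sub>R e" and v: "v \<in> span {e}" for M e n v
  proof -
    obtain k where "v = k *\<^sub>R e" using v by (auto simp: span_singleton)
    then show ?thesis using funpow_eigenvector[OF M] \<nu> by (simp add: abs_mult)
  qed
  have D_L: "frechet_derivative L (at x) = L" for x
    using frechet_derivative_linear[OF L(1), where n=1] by simp
  show ?thesis
    unfolding anosov_def D_L frechet_derivative_linear[OF L(1)] frechet_derivative_linear[OF L(2)]
  proof (rule exI[of _ 1], rule exI[of _ \<nu>], rule exI[of _ "\<lambda>_. span {es}"],
      rule exI[of _ "\<lambda>_. span {eu}"], intro conjI allI impI)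
    show "L ` span {es} = span {es}" "L ` span {eu} = span {eu}"
      using eigenline_image[OF L(1) es(1)] eigenline_image[OF L(1) eu(1)] \<nu> by simp_all
  qed (use \<nu> sum_UNIV trivial_meet decay[OF L(1) es(1)] decay[OF L(2) Li_eu] in
        \<open>simp_all add: subspace_span\<close>)
qed

lemma small_root_of_characteristic_polynomial:
  fixes T :: real
  assumes "T > 2"
  shows "\<exists>\<nu>. 0 < \<nu> \<and> \<nu> < 1 \<and> \<nu>\<^sup>2 - T * \<nu> + 1 = 0"
proof -
  define s where "s = sqrt (T\<^sup>2 - 4)"
  have "2\<^sup>2 < T\<^sup>2" using assms by (intro power_strict_mono) auto
  then have T2: "4 \<le> T\<^sup>2" by simp
  then have s2: "s\<^sup>2 = T\<^sup>2 - 4" unfolding s_def by simp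
  have "s \<ge> 0" using T2 by (simp add: s_def)
  have "(T - 2)\<^sup>2 < s\<^sup>2" "s\<^sup>2 < T\<^sup>2"
    using s2 assms by (simp_all add: power2_eq_square algebra_simps)
  then have "T - 2 < s" "s < T"
    using \<open>s \<ge> 0\<close> assms by (auto intro: power_less_imp_less_base)
  moreover have "((T - s) / 2)\<^sup>2 - T * ((T - s) / 2) + 1 = 0"
    using s2 by (simp add: power2_eq_square field_simps)
  ultimately show ?thesis by (intro exI[of _ "(T - s) / 2"]) auto
qed

lemma eigenvector_of_root:
  fixes B :: "int^2^2"
  assumes det: "det B = 1" and root: "c\<^sup>2 - of_int (B$1$1 + B$2$2) * c + 1 = 0"
  shows "lin_lift B (vector [of_int (B$1$2), c - of_int (B$1$1)]) =
    c *\<^sub>R vector [of_int (B$1$2), c - of_int (B$1$1)]"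
proof -
  have "real_of_int (B$1$1 * B$2$2 - B$1$2 * B$2$1) = 1" using det by (simp add: det_2)
  then show ?thesis using root
    by (simp add: vec_eq_iff forall_2 lin_lift_nth power2_eq_square algebra_simps)
qed

lemma hyperbolic_eigenvectors:
  fixes B :: "int^2^2"
  assumes det: "det B = 1" and trace: "B$1$1 + B$2$2 \<ge> 3"
  obtains \<nu> es eu where "0 < \<nu>" "\<nu> < 1" "es \<noteq> 0" "eu \<noteq> 0"
    "lin_lift B es = \<nu> *\<^sub>R es" "lin_lift B eu = (1 / \<nu>) *\<^sub>R eu"
proof -
  let ?T = "real_of_int (B$1$1 + B$2$2)"
  obtain \<nu> where \<nu>: "0 < \<nu>" "\<nu> < 1" "\<nu>\<^sup>2 - ?T * \<nu> + 1 = 0"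
    using small_root_of_characteristic_polynomial[of ?T] trace by auto
  have \<mu>: "(1 / \<nu>)\<^sup>2 - ?T * (1 / \<nu>) + 1 = 0"
    using \<nu> by (simp add: power2_eq_square field_simps)
  have "B$1$2 \<noteq> 0"
  proof
    assume "B$1$2 = 0"
    then have "B$1$1 * B$2$2 = 1" using det by (simp add: det_2)
    then show False using trace by (auto simp: zmult_eq_1_iff)
  qed
  then have "vector [of_int (B$1$2), c] \<noteq> (0 :: real^2)" for c
    by (auto simp: vec_eq_iff forall_2)
  then show ?thesis
    using that[OF \<nu>(1,2)] eigenvector_of_root[OF det \<nu>(3)] eigenvector_of_root[OF det \<mu>] by blast
qed

lemma good_map_hyperbolic:
  fixes A B Bi :: "int^2^2"
  assumes inv: "B ** Bi = mat 1" "Bi ** B = mat 1" and rev: "A ** B = Bi ** A"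
    and det: "det B = 1" and trace: "B$1$1 + B$2$2 \<ge> 3"
  shows "good_map A (lin_lift B) (lin_lift Bi)"
proof -
  obtain \<nu> es eu where \<nu>: "0 < \<nu>" "\<nu> < 1" and eigen: "es \<noteq> 0" "eu \<noteq> 0"
    "lin_lift B es = \<nu> *\<^sub>R es" "lin_lift B eu = (1 / \<nu>) *\<^sub>R eu"
    using hyperbolic_eigenvectors[OF det trace] by blast
  have "anosov (lin_lift B) (lin_lift Bi)"
    by (rule anosov_linear[OF linear_lin_lift linear_lin_lift _ eigen(3,1) eigen(4,2) \<nu>])
      (simp add: lin_lift_inverse inv)
  then show ?thesis
    using torus_diffeo_lin_lift[OF inv] area_preserving_lin_lift[OF inv] det
      reversible_lin_lift[OF rev]
    by (simp add: good_map_def)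
qed

section \<open>Existence of a reversible Anosov automorphism\<close>

lemma mat2_eq:
  "(M::'a^2^2) = P \<longleftrightarrow> M$1$1 = P$1$1 \<and> M$1$2 = P$1$2 \<and> M$2$1 = P$2$1 \<and> M$2$2 = P$2$2"
  by (auto simp: vec_eq_iff forall_2)

lemma mat2_mult_nth: "((M::'a::semiring_1^2^2) ** P) $ i $ j = M$i$1 * P$1$j + M$i$2 * P$2$j"
  by (simp add: matrix_matrix_mult_def sum_2)

lemma involution_traceless:
  fixes A :: "int^2^2"
  assumes "A ** A = mat 1" "A \<noteq> mat 1" "A \<noteq> - mat 1"
  shows "A$2$2 = - A$1$1" "A$1$1 * A$1$1 + A$1$2 * A$2$1 = 1"
proof -
  let ?a = "A$1$1" and ?b = "A$1$2" and ?c = "A$2$1" and ?d = "A$2$2"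
  have e: "?a * ?a + ?b * ?c = 1" "(?a + ?d) * ?b = 0" "(?a + ?d) * ?c = 0" "?c * ?b + ?d * ?d = 1"
    using assms(1) unfolding mat2_eq mat2_mult_nth by (simp_all add: mat_def algebra_simps)
  show "?d = - ?a"
  proof (rule ccontr)
    assume ne: "?d \<noteq> - ?a"
    then have bc: "?b = 0" "?c = 0" using e(2,3) by simp_all
    then have "?a * ?a = 1" "?d * ?d = 1" using e by auto
    then have "?a = ?d \<and> (?a = 1 \<or> ?a = -1)" using ne by (auto simp: zmult_eq_1_iff)
    then have "A = mat 1 \<or> A = - mat 1" using bc unfolding mat2_eq by (auto simp: mat_def)
    then show False using assms by blast
  qed
  show "?a * ?a + ?b * ?c = 1" by (rule e(1))
qed

text \<open>Given \<open>a\<^sup>2 + b c = 1\<close> there is another integral traceless involution \<open>N = (p, q; r, -p)\<close>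
  with \<open>tr(A N) = 2 a p + b r + c q \<ge> 3\<close>.\<close>

lemma involution_with_large_trace:
  fixes a b c :: int
  assumes "a * a + b * c = 1"
  shows "\<exists>p q r. p * p + q * r = 1 \<and> 2 * a * p + b * r + c * q \<ge> 3"
proof -
  define k where "k = \<bar>2 * a\<bar> + 3"
  have large: "x * x * k \<ge> k" if "x \<noteq> 0" for x :: int
  proof -
    have "1 * 1 \<le> \<bar>x\<bar> * \<bar>x\<bar>" using that by (intro mult_mono) auto
    then have "1 \<le> x * x" by (simp add: abs_mult_self_eq)
    then show ?thesis using mult_right_mono[of 1 "x * x" k] k_def by simp
  qed
  consider "c \<noteq> 0" | "c = 0" "b \<noteq> 0" | "b = 0" "c = 0" by blast
  then show ?thesis
  proof cases
    case 1
    then have "2 * a * 1 + b * 0 + c * (c * k) \<ge> 3"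
      using large[of c] unfolding k_def by (simp add: algebra_simps)
    then show ?thesis by (intro exI[of _ 1] exI[of _ "c * k"] exI[of _ 0]) simp
  next
    case 2
    then have "2 * a * 1 + b * (b * k) + c * 0 \<ge> 3"
      using large[of b] unfolding k_def by (simp add: algebra_simps)
    then show ?thesis by (intro exI[of _ 1] exI[of _ 0] exI[of _ "b * k"]) simp
  next
    case 3
    then have "a * a = 1" using assms by simp
    then show ?thesis using 3
      by (intro exI[of _ "2 * a"] exI[of _ 3] exI[of _ "-1"]) (simp add: algebra_simps)
  qed
qed

text \<open>Existence: \<open>B = A N\<close> has determinant 1, trace at least 3 and satisfies
  \<open>A B A = N A = B\<^sup>-\<^sup>1\<close>.\<close>

lemma reversible_anosov_exists:
  fixes A :: "int^2^2"
  assumes inv: "A ** A = mat 1" and "A \<noteq> mat 1" "A \<noteq> - mat 1"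
  shows "\<exists>F G. good_map A F G"
proof -
  note A = involution_traceless[OF assms]
  obtain p q r where pqr: "p * p + q * r = 1" "2 * A$1$1 * p + A$1$2 * r + A$2$1 * q \<ge> 3"
    using involution_with_large_trace[OF A(2)] by blast
  define N :: "int^2^2" where "N = vector [vector [p, q], vector [r, -p]]"
  have NN: "N ** N = mat 1"
    unfolding mat2_eq mat2_mult_nth using pqr(1) by (simp add: N_def mat_def algebra_simps)
  have "(A ** N) ** (N ** A) = A ** (N ** N) ** A" "(N ** A) ** (A ** N) = N ** (A ** A) ** N"
    by (simp_all add: matrix_mul_assoc)
  then have BBi: "(A ** N) ** (N ** A) = mat 1" "(N ** A) ** (A ** N) = mat 1"
    by (simp_all add: NN inv matrix_mul_rid)
  have "A ** (A ** N) = (A ** A) ** N" "(N ** A) ** A = N ** (A ** A)"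
    by (simp_all add: matrix_mul_assoc)
  then have rev: "A ** (A ** N) = (N ** A) ** A"
    by (simp add: inv matrix_mul_lid matrix_mul_rid)
  have "det A = -1" using A by (simp add: det_2 algebra_simps)
  moreover have "det N = -1" using pqr(1) by (simp add: det_2 N_def algebra_simps)
  ultimately have det: "det (A ** N) = 1" by (simp add: det_mul)
  have trace: "(A ** N)$1$1 + (A ** N)$2$2 \<ge> 3"
    using pqr(2) A(1) by (simp add: mat2_mult_nth N_def algebra_simps)
  show ?thesis using good_map_hyperbolic[OF BBi rev det trace] by blast
qed

section \<open>Conjugating by a translation\<close>

definition translate_conj :: "real^2 \<Rightarrow> (real^2 \<Rightarrow> real^2) \<Rightarrow> real^2 \<Rightarrow> real^2" where
  "translate_conj c F x = F (x + c) - c"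

lemma has_derivative_shift:
  fixes h :: "'a::real_normed_vector \<Rightarrow> 'b::real_normed_vector"
  assumes "(h has_derivative D) (at (x + c))"
  shows "((\<lambda>y. h (y + c) - d) has_derivative D) (at x)"
proof -
  have "((\<lambda>y. y + c) has_derivative (\<lambda>v. v)) (at x)"
    by (auto intro!: derivative_eq_intros)
  from has_derivative_compose[OF this assms] show ?thesis
    by (auto intro!: derivative_eq_intros)
qed

lemma has_derivative_shift_iff:
  fixes h :: "'a::real_normed_vector \<Rightarrow> 'b::real_normed_vector"
  shows "((\<lambda>y. h (y + c) - d) has_derivative D) (at x) \<longleftrightarrow> (h has_derivative D) (at (x + c))"
proof
  assume "((\<lambda>y. h (y + c) - d) has_derivative D) (at x)"
  from has_derivative_shift[of "\<lambda>y. h (y + c) - d" D "x + c" "- c" "- d", simplified] this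
  show "(h has_derivative D) (at (x + c))" by simp
qed (rule has_derivative_shift)

lemma frechet_derivative_shift:
  fixes h :: "'a::real_normed_vector \<Rightarrow> 'b::real_normed_vector"
  shows "frechet_derivative (\<lambda>y. h (y + c) - d) (at x) = frechet_derivative h (at (x + c))"
  unfolding frechet_derivative_def has_derivative_shift_iff ..

lemma differentiable_translate_conj:
  "translate_conj c h differentiable (at x) \<longleftrightarrow> h differentiable (at (x + c))"
  unfolding differentiable_def translate_conj_def[abs_def] has_derivative_shift_iff ..

lemma frechet_derivative_translate_conj:
  "frechet_derivative (translate_conj c h) (at x) = frechet_derivative h (at (x + c))"
  unfolding translate_conj_def[abs_def] by (rule frechet_derivative_shift)

lemma funpow_translate_conj: "translate_conj c F ^^ n = translate_conj c (F ^^ n)"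
  by (induction n) (auto simp: translate_conj_def fun_eq_iff)

lemma torus_diffeo_continuous: "torus_diffeo F G \<Longrightarrow> continuous_on UNIV F"
  unfolding torus_diffeo_def C1_map_def
  by (intro differentiable_imp_continuous_on) (simp add: differentiable_on_def)

lemma C1_map_translate_conj:
  assumes "C1_map F"
  shows "C1_map (translate_conj c F)"
proof -
  have "continuous_on UNIV (\<lambda>x. matrix (frechet_derivative F (at x)))"
    using assms by (simp add: C1_map_def)
  then have "continuous_on UNIV (\<lambda>x. matrix (frechet_derivative F (at (x + c))))"
    by (rule continuous_on_compose2) (intro continuous_intros, simp)
  then show ?thesis
    using assms by (simp add: C1_map_def differentiable_translate_conj frechet_derivative_translate_conj)
qed

lemma torus_diffeo_translate_conj:
  assumes "torus_diffeo F G"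
  shows "torus_diffeo (translate_conj c F) (translate_conj c G)"
proof -
  have "translate_conj c F (x + k) - translate_conj c F x = F ((x + c) + k) - F (x + c)" for F x k
    by (simp add: translate_conj_def algebra_simps)
  then have "descends F \<Longrightarrow> descends (translate_conj c F)" for F
    by (simp add: descends_def)
  moreover have "translate_conj c G (translate_conj c F x) = x" "translate_conj c F (translate_conj c G x) = x" for x
    using assms by (simp_all add: torus_diffeo_def translate_conj_def)
  ultimately show ?thesis
    using assms C1_map_translate_conj unfolding torus_diffeo_def by blast
qed

text \<open>Area preservation: translations preserve area, and area-preserving maps compose
  (the preimage of a periodic set under a map of the torus is periodic).\<close>

lemma periodic_preimage:
  assumes "descends F" "periodic_set E"
  shows "periodic_set {x. F x \<in> E}"
  unfolding periodic_set_def
proof (intro allI impI)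
  fix x k :: "real^2" assume "int_vec k"
  then have "int_vec (F (x + k) - F x)" using assms(1) by (simp add: descends_def)
  then have "F x + (F (x + k) - F x) \<in> E \<longleftrightarrow> F x \<in> E"
    using assms(2) unfolding periodic_set_def by blast
  then show "x + k \<in> {x. F x \<in> E} \<longleftrightarrow> x \<in> {x. F x \<in> E}" by simp
qed

lemma area_preserving_translation: "area_preserving (\<lambda>x. x + c)"
  unfolding area_preserving_def
proof safe
  fix E assume E: "E \<in> sets lborel" "periodic_set E"
  note [measurable] = E(1)
  have "{x. x + c \<in> E} \<inter> unit_cube = {x. x + c \<in> E \<inter> {y. y + (- c) \<in> unit_cube}}" by auto
  also have "emeasure lborel \<dots> = emeasure lborel (E \<inter> {y. y + (- c) \<in> unit_cube})"
    by (rule emeasure_translate) measurable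
  also have "\<dots> = emeasure lborel (E \<inter> unit_cube)"
    by (rule emeasure_periodic_translated_cube[OF E])
  finally show "emeasure lborel ({x. x + c \<in> E} \<inter> unit_cube) = emeasure lborel (E \<inter> unit_cube)" .
qed

lemma area_preserving_comp:
  assumes F: "area_preserving F" "descends F" "F \<in> borel_measurable borel"
    and H: "area_preserving H"
  shows "area_preserving (\<lambda>x. F (H x))"
  unfolding area_preserving_def
proof safe
  fix E assume E: "E \<in> sets lborel" "periodic_set E"
  have P: "{y. F y \<in> E} \<in> sets lborel" "periodic_set {y. F y \<in> E}"
    using E F(2,3) by (auto intro: periodic_preimage measurable_sets_borel)
  have "emeasure lborel ({x. F (H x) \<in> E} \<inter> unit_cube) =
      emeasure lborel ({x. H x \<in> {y. F y \<in> E}} \<inter> unit_cube)" by simp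
  also have "\<dots> = emeasure lborel ({y. F y \<in> E} \<inter> unit_cube)"
    using H P unfolding area_preserving_def by blast
  also have "\<dots> = emeasure lborel (E \<inter> unit_cube)"
    using F(1) E unfolding area_preserving_def by blast
  finally show "emeasure lborel ({x. F (H x) \<in> E} \<inter> unit_cube) = emeasure lborel (E \<inter> unit_cube)" .
qed

lemma area_preserving_translate_conj:
  assumes "area_preserving F" "descends F" "continuous_on UNIV F"
  shows "area_preserving (translate_conj c F)"
proof -
  have F_borel: "F \<in> borel_measurable borel" by (rule borel_measurable_continuous_onI[OF assms(3)])
  have "descends (\<lambda>x. x + c)" for c :: "real^2" by (simp add: descends_def)
  have FH: "area_preserving (\<lambda>x. F (x + c))"
    by (rule area_preserving_comp[OF assms(1,2) F_borel area_preserving_translation])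
  have "area_preserving (\<lambda>x. F (x + c) + - c)"
    by (rule area_preserving_comp[OF area_preserving_translation _ _ FH])
      (simp_all add: descends_def)
  then show ?thesis by (simp add: translate_conj_def[abs_def])
qed

text \<open>Translations by vectors fixed by \<open>A\<close> commute with \<open>R\<close>, hence preserve reversibility.\<close>

lemma reversible_translate_conj:
  assumes "reversible A F G" "lin_lift A c = c"
  shows "reversible A (translate_conj c F) (translate_conj c G)"
  unfolding reversible_def
proof
  fix x
  have "lin_lift A (translate_conj c F x) = lin_lift A (F (x + c)) - c"
    using assms(2) by (simp add: translate_conj_def linear_diff[OF linear_lin_lift])
  moreover have "translate_conj c G (lin_lift A x) = G (lin_lift A (x + c)) - c"
    using assms(2) by (simp add: translate_conj_def lin_lift_add)
  moreover have "teq (lin_lift A (F (x + c))) (G (lin_lift A (x + c)))"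
    using assms(1) by (simp add: reversible_def)
  ultimately show "teq (lin_lift A (translate_conj c F x)) (translate_conj c G (lin_lift A x))"
    by (simp add: teq_def)
qed

lemma anosov_translate_conj:
  assumes "anosov F G"
  shows "anosov (translate_conj c F) (translate_conj c G)"
proof -
  from assms obtain C lam Es Eu where const: "C > 0" "0 < lam" "lam < 1"
    and periodic: "\<forall>x k. int_vec k \<longrightarrow> Es (x + k) = Es x \<and> Eu (x + k) = Eu x"
    and splitting: "\<forall>x. subspace (Es x) \<and> subspace (Eu x) \<and> Es x \<inter> Eu x = {0} \<and>
           {a + b | a b. a \<in> Es x \<and> b \<in> Eu x} = UNIV \<and>
           frechet_derivative F (at x) ` Es x = Es (F x) \<and>
           frechet_derivative F (at x) ` Eu x = Eu (F x) \<and>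
           (\<forall>n v. v \<in> Es x \<longrightarrow>
              norm (frechet_derivative (F ^^ n) (at x) v) \<le> C * lam ^ n * norm v) \<and>
           (\<forall>n v. v \<in> Eu x \<longrightarrow>
              norm (frechet_derivative (G ^^ n) (at x) v) \<le> C * lam ^ n * norm v)"
    unfolding anosov_def by (elim exE conjE) blast
  show ?thesis
    unfolding anosov_def
  proof (rule exI[of _ C], rule exI[of _ lam], rule exI[of _ "\<lambda>x. Es (x + c)"],
      rule exI[of _ "\<lambda>x. Eu (x + c)"], intro conjI allI impI)
    fix x k :: "real^2" assume k: "int_vec k"
    have shift: "x + k + c = (x + c) + k" by (simp add: algebra_simps)
    show "Es (x + k + c) = Es (x + c)" "Eu (x + k + c) = Eu (x + c)"
      unfolding shift using periodic k by blast+
  next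
    fix x
    have image: "translate_conj c F x + c = F (x + c)" by (simp add: translate_conj_def)
    note split_x = splitting[rule_format, of "x + c"]
    show "subspace (Es (x + c))" "subspace (Eu (x + c))" "Es (x + c) \<inter> Eu (x + c) = {0}"
      "{a + b |a b. a \<in> Es (x + c) \<and> b \<in> Eu (x + c)} = UNIV" by (simp_all add: split_x)
    show "frechet_derivative (translate_conj c F) (at x) ` Es (x + c) = Es (translate_conj c F x + c)"
      "frechet_derivative (translate_conj c F) (at x) ` Eu (x + c) = Eu (translate_conj c F x + c)"
      unfolding image frechet_derivative_translate_conj by (simp_all add: split_x)
    fix n v
    show "v \<in> Es (x + c) \<Longrightarrow>
        norm (frechet_derivative (translate_conj c F ^^ n) (at x) v) \<le> C * lam ^ n * norm v"
      "v \<in> Eu (x + c) \<Longrightarrow>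
        norm (frechet_derivative (translate_conj c G ^^ n) (at x) v) \<le> C * lam ^ n * norm v"
      unfolding funpow_translate_conj frechet_derivative_translate_conj by (simp_all add: split_x)
  qed (rule const)+
qed

lemma good_map_translate_conj:
  assumes "good_map A F G" "lin_lift A c = c"
  shows "good_map A (translate_conj c F) (translate_conj c G)"
proof -
  have F: "torus_diffeo F G" "area_preserving F" "reversible A F G" "anosov F G"
    using assms(1) by (simp_all add: good_map_def)
  have "descends F" using F(1) by (simp add: torus_diffeo_def)
  then show ?thesis
    unfolding good_map_def
    using torus_diffeo_translate_conj[OF F(1)] reversible_translate_conj[OF F(3) assms(2)]
      area_preserving_translate_conj[OF F(2) _ torus_diffeo_continuous[OF F(1)]]
      anosov_translate_conj[OF F(4)]
    by blast
qed

section \<open>Small translations give \<open>C\<^sup>1\<close>-close conjugates\<close>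

lemma descends_increment_constant:
  assumes "descends F" "continuous_on UNIV F" "int_vec k"
  shows "F (x + k) - F x = F (y + k) - F y"
proof -
  have "continuous_on UNIV (\<lambda>x. F (x + k) - F x)"
    by (intro continuous_intros continuous_on_compose2[OF assms(2)]) auto
  from int_vec_valued_constant[OF connected_UNIV this] show ?thesis
    using assms by (auto simp: descends_def)
qed

lemma frechet_derivative_periodic:
  assumes "descends F" "continuous_on UNIV F" "int_vec k"
  shows "frechet_derivative F (at (x + k)) = frechet_derivative F (at x)"
proof -
  have "(\<lambda>y. F (y + k) - (F k - F 0)) = (\<lambda>y. F (y + 0) - 0)"
    using descends_increment_constant[OF assms, of _ 0] by (auto simp: fun_eq_iff algebra_simps)
  then show ?thesis
    using frechet_derivative_shift[of F k "F k - F 0" x] frechet_derivative_shift[of F 0 0 x] by simp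
qed

text \<open>A continuous function on \<open>\<real>\<^sup>2\<close> with \<open>\<int>\<^sup>2\<close>-periodic increments is uniformly continuous,
  by compactness of a neighbourhood of the unit cube.\<close>

lemma uniformly_continuous_periodic:
  fixes f :: "real^2 \<Rightarrow> 'b::real_normed_vector"
  assumes cont: "continuous_on UNIV f"
    and per: "\<And>x y k. int_vec k \<Longrightarrow> f (x + k) - f x = f (y + k) - f y" and e: "e > 0"
  shows "\<exists>d>0. \<forall>x y. dist x y < d \<longrightarrow> dist (f x) (f y) < e"
proof -
  have "uniformly_continuous_on (cball 0 3) f"
    by (rule compact_uniformly_continuous[OF continuous_on_subset[OF cont]]) auto
  then obtain d where d: "d > 0"
    "\<And>x x'. x \<in> cball 0 3 \<Longrightarrow> x' \<in> cball 0 3 \<Longrightarrow> dist x' x < d \<Longrightarrow> dist (f x') (f x) < e"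
    using e unfolding uniformly_continuous_on_def by metis
  show ?thesis
  proof (intro exI[of _ "min d 1"] conjI allI impI)
    show "min d 1 > 0" using d by simp
    fix x y :: "real^2" assume xy: "dist x y < min d 1"
    obtain m where m: "int_vec m" "x + m \<in> unit_cube" using unit_cube_translate_ex by blast
    have nx: "norm (x + m) \<le> 2" using norm_unit_cube[OF m(2)] .
    have dxy: "dist (y + m) (x + m) = dist x y" by (simp add: dist_norm norm_minus_commute)
    have "norm (y + m) \<le> norm (x + m) + dist (y + m) (x + m)"
      by (metis dist_norm norm_triangle_sub add.commute)
    then have ny: "norm (y + m) \<le> 3" using nx dxy xy by simp
    have "dist (f (y + m)) (f (x + m)) < e"
      using d(2)[of "x + m" "y + m"] nx ny dxy xy by simp
    moreover have "f x - f y = f (x + m) - f (y + m)"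
      using per[OF m(1), of x y] by (simp add: algebra_simps)
    ultimately show "dist (f x) (f y) < e" by (simp add: dist_norm norm_minus_commute)
  qed
qed

text \<open>Conjugates by small translations are uniformly \<open>C\<^sup>1\<close>-close to the original map,
  since \<open>F\<close> and \<open>DF\<close> are uniformly continuous.\<close>

lemma translate_conj_close:
  assumes "torus_diffeo F G" "\<epsilon> > 0"
  shows "\<exists>\<delta>>0. \<forall>c x. norm c < \<delta> \<longrightarrow> norm (translate_conj c F x - F x) < \<epsilon> \<and>
    norm (matrix (frechet_derivative (translate_conj c F) (at x)) -
      matrix (frechet_derivative F (at x))) < \<epsilon>"
proof -
  have cont: "continuous_on UNIV F" by (rule torus_diffeo_continuous[OF assms(1)])
  have desc: "descends F" using assms(1) by (simp add: torus_diffeo_def)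
  have cont_D: "continuous_on UNIV (\<lambda>x. matrix (frechet_derivative F (at x)))"
    using assms(1) by (simp add: torus_diffeo_def C1_map_def)
  obtain d1 where d1: "d1 > 0" "\<And>x y. dist x y < d1 \<Longrightarrow> dist (F x) (F y) < \<epsilon> / 2"
    using uniformly_continuous_periodic[OF cont descends_increment_constant[OF desc cont], of "\<epsilon> / 2"]
      assms(2) by auto
  have "matrix (frechet_derivative F (at (x + k))) - matrix (frechet_derivative F (at x)) =
    matrix (frechet_derivative F (at (y + k))) - matrix (frechet_derivative F (at y))"
    if "int_vec k" for x y k
    using frechet_derivative_periodic[OF desc cont that] by simp
  from uniformly_continuous_periodic[OF cont_D this assms(2)]
  obtain d2 where d2: "d2 > 0" "\<And>x y. dist x y < d2 \<Longrightarrow>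
      dist (matrix (frechet_derivative F (at x))) (matrix (frechet_derivative F (at y))) < \<epsilon>"
    by blast
  show ?thesis
  proof (intro exI[of _ "min (min d1 d2) (\<epsilon> / 2)"] conjI allI impI)
    show "min (min d1 d2) (\<epsilon> / 2) > 0" using d1 d2 assms(2) by simp
    fix c x :: "real^2" assume c: "norm c < min (min d1 d2) (\<epsilon> / 2)"
    then have "dist (x + c) x < d1" "dist (x + c) x < d2" by (simp_all add: dist_norm)
    then have "norm (F (x + c) - F x) < \<epsilon> / 2"
      "norm (matrix (frechet_derivative F (at (x + c))) - matrix (frechet_derivative F (at x))) < \<epsilon>"
      using d1(2) d2(2) by (simp_all add: dist_norm)
    moreover have "norm (F (x + c) - c - F x) \<le> norm (F (x + c) - F x) + norm c"
      using norm_triangle_ineq4[of "F (x + c) - F x" c] by (simp add: algebra_simps)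
    ultimately show "norm (translate_conj c F x - F x) < \<epsilon>"
      "norm (matrix (frechet_derivative (translate_conj c F) (at x)) -
        matrix (frechet_derivative F (at x))) < \<epsilon>"
      using c by (simp_all add: translate_conj_def frechet_derivative_translate_conj)
  qed
qed

section \<open>An Anosov map does not commute with small translations\<close>

lemma nonpos_if_le_geometric:
  fixes lam K a :: real
  assumes "0 < lam" "lam < 1" "\<And>n. a \<le> K * lam ^ n"
  shows "a \<le> 0"
proof -
  have "(\<lambda>n. K * lam ^ n) \<longlonglongrightarrow> K * 0"
    by (intro tendsto_mult tendsto_const LIMSEQ_power_zero) (use assms in auto)
  then have "a \<le> K * 0" by (rule LIMSEQ_le_const) (use assms in auto)
  then show ?thesis by simp
qed

text \<open>The linear-algebra core of the rigidity argument: if linear maps \<open>L\<^sub>n\<close> all fix \<open>p\<close>, and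
  \<open>p = s + u\<close> where \<open>L\<^sub>n\<close> contracts \<open>s\<close> and the inverses \<open>L\<^sub>n\<^sup>-\<^sup>1\<close> contract \<open>L\<^sub>n u\<close> uniformly
  exponentially, then \<open>p = 0\<close>: first \<open>u\<close> is squeezed to \<open>0\<close>, then \<open>p = L\<^sub>n s\<close> is.\<close>

lemma fixed_vector_of_hyperbolic_sequence:
  fixes L Li :: "nat \<Rightarrow> 'a::real_normed_vector \<Rightarrow> 'a"
  assumes lin: "\<And>n. linear (L n)" and fixed: "\<And>n. L n p = p" and p: "p = s + u"
    and inv: "\<And>n. Li n (L n u) = u"
    and contract_s: "\<And>n. norm (L n s) \<le> C * lam ^ n * norm s"
    and contract_u: "\<And>n. norm (Li n (L n u)) \<le> C * lam ^ n * norm (L n u)"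
    and C: "C > 0" and lam: "0 < lam" "lam < 1"
  shows "p = 0"
proof -
  have "norm u \<le> (C * (norm p + C * norm s)) * lam ^ n" for n
  proof -
    have "L n s + L n u = p" using fixed[of n] linear_add[OF lin, of n s u] p by simp
    then have "L n u = p - L n s" by (simp add: algebra_simps)
    then have "norm (L n u) \<le> norm p + norm (L n s)" by (simp add: norm_triangle_ineq4)
    also have "norm (L n s) \<le> C * (lam ^ n * norm s)" using contract_s[of n] by (simp add: mult.assoc)
    also have "\<dots> \<le> C * (1 * norm s)"
      using lam C by (intro mult_left_mono mult_right_mono power_le_one) auto
    finally have "C * lam ^ n * norm (L n u) \<le> C * lam ^ n * (norm p + C * norm s)"
      using C lam by (intro mult_left_mono) auto
    then show ?thesis using contract_u[of n] inv[of n] by (simp add: algebra_simps)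
  qed
  then have "norm u \<le> 0" by (rule nonpos_if_le_geometric[OF lam])
  then have "p = s" using p by simp
  then have "norm p \<le> (C * norm p) * lam ^ n" for n
    using contract_s[of n] fixed[of n] by (simp add: algebra_simps)
  then have "norm p \<le> 0" by (rule nonpos_if_le_geometric[OF lam])
  then show ?thesis by simp
qed

lemma funpow_differentiable:
  fixes F :: "'a::real_normed_vector \<Rightarrow> 'a"
  assumes "\<And>x. F differentiable (at x)"
  shows "(F ^^ n) differentiable (at x)"
proof (induction n arbitrary: x)
  case (Suc n)
  have "(F \<circ> (F ^^ n)) differentiable (at x)" by (rule differentiable_chain_at[OF Suc assms])
  then show ?case by (simp add: o_def)
qed (simp add: id_def)

lemma funpow_left_inverse:
  fixes F G :: "'a \<Rightarrow> 'a"
  assumes "\<And>x. G (F x) = x"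
  shows "(G ^^ n) ((F ^^ n) x) = x"
proof (induction n arbitrary: x)
  case (Suc n)
  have G_Suc: "(G ^^ Suc n) z = (G ^^ n) (G z)" for z
    by (metis funpow_Suc_right comp_apply)
  have "(G ^^ Suc n) ((F ^^ Suc n) x) = (G ^^ n) (G (F ((F ^^ n) x)))"
    by (simp only: G_Suc) simp
  then show ?case using Suc assms by simp
qed simp

lemma frechet_derivative_chain:
  fixes F H :: "'a::real_normed_vector \<Rightarrow> 'a"
  assumes "H differentiable (at x)" "F differentiable (at (H x))"
  shows "frechet_derivative (\<lambda>y. F (H y)) (at x) v =
    frechet_derivative F (at (H x)) (frechet_derivative H (at x) v)"
  using frechet_derivative_compose[OF assms] by (simp add: o_def)

lemma frechet_derivative_funpow_inverse:
  assumes "torus_diffeo F G"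
  shows "frechet_derivative (G ^^ n) (at ((F ^^ n) x)) (frechet_derivative (F ^^ n) (at x) v) = v"
proof -
  have diff: "\<And>x. F differentiable (at x)" "\<And>x. G differentiable (at x)"
    and inv: "\<And>x. G (F x) = x"
    using assms by (auto simp: torus_diffeo_def C1_map_def)
  have "frechet_derivative (G ^^ n) (at ((F ^^ n) x)) (frechet_derivative (F ^^ n) (at x) v) =
      frechet_derivative (\<lambda>y. (G ^^ n) ((F ^^ n) y)) (at x) v"
    by (intro frechet_derivative_chain[symmetric] funpow_differentiable diff)
  also have "(\<lambda>y. (G ^^ n) ((F ^^ n) y)) = (\<lambda>y. y)"
    by (simp add: funpow_left_inverse inv)
  finally show ?thesis
    using frechet_derivative_at[OF has_derivative_ident, of x] by simp
qed

lemma frechet_derivative_funpow_invariant: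
  assumes "\<And>x. F differentiable (at x)" "\<And>x. frechet_derivative F (at x) ` E x = E (F x)"
    and "v \<in> E x"
  shows "frechet_derivative (F ^^ n) (at x) v \<in> E ((F ^^ n) x)"
proof (induction n)
  case 0
  then show ?case using frechet_derivative_at[OF has_derivative_ident, of x] assms(3)
    by (simp add: id_def)
next
  case (Suc n)
  have "frechet_derivative (F ^^ Suc n) (at x) v =
      frechet_derivative F (at ((F ^^ n) x)) (frechet_derivative (F ^^ n) (at x) v)"
    using frechet_derivative_chain[OF funpow_differentiable[OF assms(1)] assms(1)]
    by (simp add: o_def)
  also have "\<dots> \<in> E (F ((F ^^ n) x))" using Suc assms(2) by blast
  finally show ?case by (simp add: o_def)
qed

lemma anosov_no_fixed_vector:
  assumes diffeo: "torus_diffeo F G" and an: "anosov F G"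
    and fixed: "\<And>n. frechet_derivative (F ^^ n) (at x) p = p"
  shows "p = 0"
proof -
  have dF: "\<And>x. F differentiable (at x)" using diffeo by (simp add: torus_diffeo_def C1_map_def)
  from an obtain C lam Es Eu where const: "C > 0" "0 < lam" "lam < 1"
    and splitting: "\<forall>x. subspace (Es x) \<and> subspace (Eu x) \<and> Es x \<inter> Eu x = {0} \<and>
           {a + b | a b. a \<in> Es x \<and> b \<in> Eu x} = UNIV \<and>
           frechet_derivative F (at x) ` Es x = Es (F x) \<and>
           frechet_derivative F (at x) ` Eu x = Eu (F x) \<and>
           (\<forall>n v. v \<in> Es x \<longrightarrow>
              norm (frechet_derivative (F ^^ n) (at x) v) \<le> C * lam ^ n * norm v) \<and>
           (\<forall>n v. v \<in> Eu x \<longrightarrow>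
              norm (frechet_derivative (G ^^ n) (at x) v) \<le> C * lam ^ n * norm v)"
    unfolding anosov_def by (elim exE conjE) blast
  have sum: "{a + b | a b. a \<in> Es x \<and> b \<in> Eu x} = UNIV"
    and image_Eu: "\<And>y. frechet_derivative F (at y) ` Eu y = Eu (F y)"
    and contract_Es: "\<And>n v. v \<in> Es x \<Longrightarrow>
      norm (frechet_derivative (F ^^ n) (at x) v) \<le> C * lam ^ n * norm v"
    and contract_Eu: "\<And>y n v. v \<in> Eu y \<Longrightarrow>
      norm (frechet_derivative (G ^^ n) (at y) v) \<le> C * lam ^ n * norm v"
    using splitting by simp_all
  have "p \<in> {a + b | a b. a \<in> Es x \<and> b \<in> Eu x}" using sum by simp
  then obtain s u where su: "p = s + u" "s \<in> Es x" "u \<in> Eu x" by blast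
  show ?thesis
  proof (rule fixed_vector_of_hyperbolic_sequence[where L = "\<lambda>n. frechet_derivative (F ^^ n) (at x)"
        and Li = "\<lambda>n. frechet_derivative (G ^^ n) (at ((F ^^ n) x))", OF _ fixed su(1) _ _ _ const])
    fix n
    show "linear (frechet_derivative (F ^^ n) (at x))"
      using has_derivative_linear[OF frechet_derivative_works[THEN iffD1, OF funpow_differentiable[OF dF]]] .
    show "frechet_derivative (G ^^ n) (at ((F ^^ n) x)) (frechet_derivative (F ^^ n) (at x) u) = u"
      by (rule frechet_derivative_funpow_inverse[OF diffeo])
    show "norm (frechet_derivative (F ^^ n) (at x) s) \<le> C * lam ^ n * norm s"
      by (rule contract_Es[OF su(2)])
    show "norm (frechet_derivative (G ^^ n) (at ((F ^^ n) x)) (frechet_derivative (F ^^ n) (at x) u))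
        \<le> C * lam ^ n * norm (frechet_derivative (F ^^ n) (at x) u)"
      by (rule contract_Eu[OF frechet_derivative_funpow_invariant[OF dF image_Eu su(3)]])
  qed
qed

text \<open>If \<open>F\<close> commutes on the torus with all small translations along \<open>p\<close>, it commutes with them
  exactly (a continuous \<open>\<int>\<^sup>2\<close>-valued discrepancy vanishing at \<open>t = 0\<close> is zero), so every
  \<open>F\<^sup>n\<close> has directional derivative \<open>p\<close> along \<open>p\<close>.\<close>

lemma commutes_with_translations:
  assumes cont: "continuous_on UNIV F" and \<delta>: "\<delta> > 0"
    and comm: "\<And>t. \<bar>t\<bar> < \<delta> \<Longrightarrow> tmap_eq (translate_conj (t *\<^sub>R p) F) F"
    and t: "\<bar>t\<bar> < \<delta>"
  shows "F (y + t *\<^sub>R p) = F y + t *\<^sub>R p"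
proof -
  define g where "g s = F (y + s *\<^sub>R p) - s *\<^sub>R p - F y" for s :: real
  have g_cont: "continuous_on (ball 0 \<delta>) g"
    unfolding g_def by (intro continuous_intros continuous_on_compose2[OF cont]) auto
  have g_int: "int_vec (g s)" if "s \<in> ball 0 \<delta>" for s
    using comm[of s] that by (auto simp: tmap_eq_def teq_def g_def translate_conj_def)
  have "g t = g 0"
    by (rule int_vec_valued_constant[OF connected_ball g_cont g_int]) (use t \<delta> in auto)
  then show ?thesis by (simp add: g_def diff_eq_eq)
qed

lemma directional_derivative_of_equivariant:
  fixes H :: "real^2 \<Rightarrow> real^2"
  assumes dH: "H differentiable (at x)" and d: "d > 0"
    and eq: "\<And>t. \<bar>t\<bar> < d \<Longrightarrow> H (x + t *\<^sub>R p) = H x + t *\<^sub>R p"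
  shows "frechet_derivative H (at x) p = p"
proof -
  let ?D = "frechet_derivative H (at x)"
  have line: "((\<lambda>t::real. x + t *\<^sub>R p) has_derivative (\<lambda>s. s *\<^sub>R p)) (at 0)"
    by (auto intro!: derivative_eq_intros)
  have "((\<lambda>t. H (x + t *\<^sub>R p)) has_derivative (\<lambda>s. ?D (s *\<^sub>R p))) (at 0)"
    using has_derivative_compose[OF line, of H ?D] frechet_derivative_works[THEN iffD1, OF dH] by simp
  then have "((\<lambda>t. H x + t *\<^sub>R p) has_derivative (\<lambda>s. ?D (s *\<^sub>R p))) (at 0)"
    by (rule has_derivative_transform_within_open[of _ _ _ _ "ball 0 d"]) (use d eq in auto)
  moreover have "((\<lambda>t. H x + t *\<^sub>R p) has_derivative (\<lambda>s. s *\<^sub>R p)) (at (0::real))"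
    by (auto intro!: derivative_eq_intros)
  ultimately have "(\<lambda>s. ?D (s *\<^sub>R p)) = (\<lambda>s. s *\<^sub>R p)" by (rule has_derivative_unique)
  then show ?thesis by (metis scaleR_one)
qed

lemma anosov_not_commuting_with_translations:
  assumes diffeo: "torus_diffeo F G" and an: "anosov F G" and p: "p \<noteq> 0" and \<delta>: "\<delta> > 0"
  shows "\<exists>t. \<bar>t\<bar> < \<delta> \<and> \<not> tmap_eq (translate_conj (t *\<^sub>R p) F) F"
proof (rule ccontr)
  assume "\<not> ?thesis"
  then have comm: "F (y + t *\<^sub>R p) = F y + t *\<^sub>R p" if "\<bar>t\<bar> < \<delta>" for y t
    using commutes_with_translations[OF torus_diffeo_continuous[OF diffeo] \<delta>] that by blast
  have "(F ^^ n) (y + t *\<^sub>R p) = (F ^^ n) y + t *\<^sub>R p" if "\<bar>t\<bar> < \<delta>" for y t n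
    by (induction n) (simp_all add: comm[OF that])
  moreover have "\<And>x. F differentiable (at x)" using diffeo by (simp add: torus_diffeo_def C1_map_def)
  ultimately have "frechet_derivative (F ^^ n) (at 0) p = p" for n
    by (intro directional_derivative_of_equivariant[OF funpow_differentiable \<delta>])
  then show False using anosov_no_fixed_vector[OF diffeo an] p by blast
qed

section \<open>Non-isolation and the main theorem\<close>

lemma involution_fixed_vector:
  fixes A :: "int^2^2"
  assumes "A ** A = mat 1" "A \<noteq> mat 1" "A \<noteq> - mat 1"
  shows "\<exists>p. p \<noteq> 0 \<and> lin_lift A p = p"
proof -
  note A = involution_traceless[OF assms]
  define a where "a = real_of_int (A$1$1)"
  define b where "b = real_of_int (A$1$2)"
  define c where "c = real_of_int (A$2$1)"
  have d: "real_of_int (A$2$2) = - a" using A(1) by (simp add: a_def)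
  have "a * a + b * c = 1" unfolding a_def b_def c_def using A(2)
    by (metis of_int_1 of_int_add of_int_mult)
  then have e: "c * b + - a * (1 - a) = 1 - a" by (simp add: algebra_simps)
  show ?thesis
  proof (cases "b = 0 \<and> a = 1")
    case True
    then show ?thesis using d
      by (intro exI[of _ "vector [2, c] :: real^2"])
        (auto simp: vec_eq_iff forall_2 lin_lift_nth a_def b_def c_def)
  next
    case False
    then have "(vector [b, 1 - a] :: real^2) \<noteq> 0" by (auto simp: vec_eq_iff forall_2)
    moreover have "lin_lift A (vector [b, 1 - a]) = vector [b, 1 - a]"
      using d e by (auto simp: vec_eq_iff forall_2 lin_lift_nth a_def b_def c_def algebra_simps)
    ultimately show ?thesis by blast
  qed
qed

lemma good_map_not_isolated:
  assumes good: "good_map A F G" and \<epsilon>: "\<epsilon> > 0" and p: "p \<noteq> 0" "lin_lift A p = p"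
  shows "\<exists>F' G'. good_map A F' G' \<and> \<not> tmap_eq F' F \<and>
    (\<forall>x. norm (F' x - F x) < \<epsilon> \<and>
      norm (matrix (frechet_derivative F' (at x)) - matrix (frechet_derivative F (at x))) < \<epsilon>)"
proof -
  have diffeo: "torus_diffeo F G" and an: "anosov F G" using good by (simp_all add: good_map_def)
  obtain \<delta> where \<delta>: "\<delta> > 0" and close: "\<And>c x. norm c < \<delta> \<Longrightarrow>
      norm (translate_conj c F x - F x) < \<epsilon> \<and>
      norm (matrix (frechet_derivative (translate_conj c F) (at x)) -
        matrix (frechet_derivative F (at x))) < \<epsilon>"
    using translate_conj_close[OF diffeo \<epsilon>] by blast
  obtain t where t: "\<bar>t\<bar> < \<delta> / norm p" "\<not> tmap_eq (translate_conj (t *\<^sub>R p) F) F"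
    using anosov_not_commuting_with_translations[OF diffeo an p(1), of "\<delta> / norm p"] \<delta> p(1)
    by auto
  have "norm (t *\<^sub>R p) < \<delta>" using t(1) p(1) by (simp add: field_simps)
  moreover have "lin_lift A (t *\<^sub>R p) = t *\<^sub>R p" by (simp add: linear_scale[OF linear_lin_lift] p(2))
  ultimately show ?thesis
    using good_map_translate_conj[OF good] close t(2) by blast
qed

theorem mainTheorem15:
  fixes A :: "int^2^2"
  assumes "det A = 1 \<or> det A = -1"
    and "A ** A = mat 1"
    and "A \<noteq> mat 1" and "A \<noteq> - mat 1"
  shows "(\<exists>F G. good_map A F G) \<and>
    (\<forall>F G \<epsilon>. good_map A F G \<and> \<epsilon> > 0 \<longrightarrow>
       (\<exists>F' G'. good_map A F' G' \<and> \<not> tmap_eq F' F \<and>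
          (\<forall>x. norm (F' x - F x) < \<epsilon> \<and>
               norm (matrix (frechet_derivative F' (at x)) - matrix (frechet_derivative F (at x))) < \<epsilon>)))"
proof -
  obtain p where "p \<noteq> 0" "lin_lift A p = p" using involution_fixed_vector[OF assms(2-4)] by blast
  then show ?thesis
    using reversible_anosov_exists[OF assms(2-4)] good_map_not_isolated by blast
qed

end
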